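(* Let $n\ge 2$, let $TT_n$ be the transitive tournament on $n$ vertices, and let $\alpha=(\alpha_1,\dots,\alpha_s)\in\mathbb{K}_s$ with $\sum_{i=1}^s|\alpha_i|=n-1$. Then the number $f_{TT_n}(\alpha)$ of oriented (Hamiltonian) paths of type $P(\alpha)$ in $TT_n$ equals $\mathcal{F}(\alpha)$ if $\alpha$ is non-symmetric, and equals $\frac{1}{2}\mathcal{F}(\alpha)$ if $\alpha$ is symmetric.
   Context: A tournament is an orientation of a complete graph. The transitive tournament $TT_n$ has vertices $v_1,\dots,v_n$ and arcs $(v_i,v_j)$ for all $i<j$. For $s\ge1$, $\mathbb{K}_s=\{(\alpha_1,\dots,\alpha_s)\in\mathbb{Z}^s:\ \alpha_i\alpha_{i+1}<0 \text{ for all } 1\le i\le s-1\}$ (in particular, when $s\ge 2$ all entries are nonzero and signs alternate; we take all entries nonzero). An oriented path is a digraph whose underlying graph is a path; a block is a maximal directed subpath. An oriented path $P$ is of type $P(\alpha_1,\dots,\alpha_s)$ if $P$ is the concatenation of $s$ blocks $I_1,\dots,I_s$, where $I_i$ has ends $x_i,y_i$, $I_i\cap I_{i+1}=\{y_i\}=\{x_{i+1}\}$, $I_i$ has length $|\alpha_i|$, and $\alpha_i>0$ iff $I_i$ is directed from $x_i$ to $y_i$. $f_T(\alpha)$ denotes the number of (distinct, i.e. with distinct arc sets) oriented paths of type $P(\alpha)$ in $T$. For $\alpha=(\alpha_1,\dots,\alpha_s)$, write $-\alpha=(-\alpha_1,\dots,-\alpha_s)$ and $\overline{\alpha}=(\alpha_s,\dots,\alpha_1)$;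 $\alpha$ is symmetric if $\alpha=-\overline{\alpha}$. The path-function $\mathcal{F}$ on tuples in $\bigcup_{s\ge1}\mathbb{K}_s$ (with nonzero entries) is defined recursively: $\mathcal{F}(\alpha_1)=1$ for every nonzero integer $\alpha_1$; for $s\ge2$, $\mathcal{F}(\alpha_1,\dots,\alpha_s)=\sum_{i=1}^s\mathcal{F}(\alpha_1,\dots,\alpha_{i-1},\alpha_i*1,\alpha_{i+1},\dots,\alpha_s)$, where $\alpha_i*1=\alpha_i-1$ if $\alpha_i>0$ and $\alpha_i*1=\alpha_i+1$ if $\alpha_i<0$, and where a tuple containing a zero entry is reduced by the rules $\mathcal{F}(0,\alpha_2,\dots,\alpha_t)=\mathcal{F}(\alpha_2,\dots,\alpha_t)$, $\mathcal{F}(\alpha_1,\dots,\alpha_{t},0)=\mathcal{F}(\alpha_1,\dots,\alpha_{t})$, and $\mathcal{F}(\alpha_1,\dots,\alpha_r,0,\alpha_{r+2},\dots,\alpha_s)=\mathcal{F}(\alpha_1,\dots,\alpha_{r-1},\alpha_r+\alpha_{r+2},\alpha_{r+3},\dots,\alpha_s)$ (here $\alpha_r,\alpha_{r+2}$ have the same sign). *)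

theory Defs
  imports Complex_Main
begin

definition inK :: "int list \<Rightarrow> bool" where
  "inK \<alpha> \<longleftrightarrow> \<alpha> \<noteq> [] \<and> (\<forall>x\<in>set \<alpha>. x \<noteq> 0)
      \<and> (\<forall>i. Suc i < length \<alpha> \<longrightarrow> \<alpha> ! i * \<alpha> ! Suc i < 0)"

definition symmetric_tuple :: "int list \<Rightarrow> bool" where
  "symmetric_tuple \<alpha> \<longleftrightarrow> \<alpha> = map uminus (rev \<alpha>)"

text \<open>Transitive tournament TT_n on vertices 0..n-1 (v_i corresponds to i-1).\<close>
definition TT :: "nat \<Rightarrow> (nat \<times> nat) set" where
  "TT n = {(i, j). i < j \<and> j < n}"

text \<open>Direction word of the type P(alpha): True = forward arc.\<close>
definition dirs :: "int list \<Rightarrow> bool list" where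
  "dirs \<alpha> = concat (map (\<lambda>a. replicate (nat \<bar>a\<bar>) (a > 0)) \<alpha>)"

definition step_arc :: "'v list \<Rightarrow> bool list \<Rightarrow> nat \<Rightarrow> 'v \<times> 'v" where
  "step_arc p d k = (if d ! k then (p ! k, p ! Suc k) else (p ! Suc k, p ! k))"

definition is_path_of_type :: "'v set \<Rightarrow> ('v \<times> 'v) set \<Rightarrow> int list \<Rightarrow> 'v list \<Rightarrow> bool" where
  "is_path_of_type V A \<alpha> p \<longleftrightarrow> distinct p \<and> set p \<subseteq> V \<and> length p = Suc (length (dirs \<alpha>))
     \<and> (\<forall>k < length (dirs \<alpha>). step_arc p (dirs \<alpha>) k \<in> A)"

definition path_arcs :: "'v list \<Rightarrow> bool list \<Rightarrow> ('v \<times> 'v) set" where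
  "path_arcs p d = step_arc p d ` {..<length d}"

text \<open>Number of distinct (by arc set) oriented paths of type P(alpha) in digraph (V,A).\<close>
definition f_count :: "'v set \<Rightarrow> ('v \<times> 'v) set \<Rightarrow> int list \<Rightarrow> nat" where
  "f_count V A \<alpha> = card {path_arcs p (dirs \<alpha>) | p. is_path_of_type V A \<alpha> p}"

definition star1 :: "int \<Rightarrow> int" where
  "star1 a = a - sgn a"

definition reduce_at :: "int list \<Rightarrow> nat \<Rightarrow> int list" where
  "reduce_at xs i =
     (if xs ! i \<noteq> 0 then xs
      else if i = 0 then tl xs
      else if Suc i = length xs then butlast xs
      else take (i - 1) xs @ [xs ! (i - 1) + xs ! Suc i] @ drop (i + 2) xs)"

definition F_meas :: "int list \<Rightarrow> nat" where
  "F_meas xs = nat (2 * sum_list (map abs xs) + int (length xs))"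

lemma sl_abs_nonneg: "0 \<le> sum_list (map abs (xs::int list))"
  by (induction xs) auto

lemma sl_upd: "i < length xs \<Longrightarrow>
   sum_list (map abs (xs[i := y])) = sum_list (map abs xs) - \<bar>xs ! i\<bar> + \<bar>y::int\<bar>"
proof (induction xs arbitrary: i)
  case Nil then show ?case by simp
next
  case (Cons a xs) then show ?case by (cases i) auto
qed

lemma sl_butlast: "sum_list (map abs (butlast (xs::int list))) \<le> sum_list (map abs xs)"
  by (induction xs) (auto simp: sl_abs_nonneg)

lemma meas_lt:
  "2 * sum_list (map abs ys) + int (length ys) < 2 * sum_list (map abs xs) + int (length xs)
   \<Longrightarrow> F_meas ys < F_meas xs"
  using sl_abs_nonneg[of ys] sl_abs_nonneg[of xs] by (simp add: F_meas_def)

lemma F_meas_dec: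
  assumes i: "i < length xs" and l: "\<not> length xs \<le> 1"
  shows "F_meas (reduce_at (xs[i := star1 (xs ! i)]) i) < F_meas xs"
proof -
  define ys where "ys = xs[i := star1 (xs ! i)]"
  have ly: "length ys = length xs" by (simp add: ys_def)
  have yi: "ys ! i = star1 (xs ! i)" using i by (simp add: ys_def)
  have sy: "sum_list (map abs ys) = sum_list (map abs xs) - \<bar>xs ! i\<bar> + \<bar>star1 (xs ! i)\<bar>"
    using i by (simp add: ys_def sl_upd)
  have ab: "\<bar>star1 a\<bar> = (if a = 0 then 0 else \<bar>a\<bar> - 1)" for a :: int
    by (auto simp: star1_def sgn_if)
  have nn: "0 \<le> sum_list (map abs ys)" "0 \<le> sum_list (map abs xs)" by (rule sl_abs_nonneg)+
  show ?thesis
  proof (cases "ys ! i = 0")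
    case False
    then have "reduce_at ys i = ys" by (simp add: reduce_at_def)
    moreover have "xs ! i \<noteq> 0" using False yi by (auto simp: star1_def)
    moreover have "\<bar>star1 (xs ! i)\<bar> = \<bar>xs ! i\<bar> - 1" using ab \<open>xs ! i \<noteq> 0\<close> by simp
    ultimately show ?thesis using sy ly unfolding ys_def[symmetric] by (intro meas_lt) simp
  next
    case z: True
    have le: "sum_list (map abs ys) \<le> sum_list (map abs xs)" using sy ab by auto
    show ?thesis
    proof (cases "i = 0")
      case True
      then have r0: "reduce_at ys i = tl ys" using z by (simp add: reduce_at_def)
      moreover have "sum_list (map abs (tl ys)) \<le> sum_list (map abs ys)"
        by (cases ys) auto
      moreover have "sum_list (map abs (tl ys)) \<ge> 0" by (rule sl_abs_nonneg)
      moreover have "length (tl ys) < length ys" using ly l by simp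
      ultimately show ?thesis using le ly unfolding ys_def[symmetric] r0 by (intro meas_lt) linarith
    next
      case i0: False
      show ?thesis
      proof (cases "Suc i = length ys")
        case True
        then have r0: "reduce_at ys i = butlast ys" using z i0 by (simp add: reduce_at_def)
        moreover have "sum_list (map abs (butlast ys)) \<le> sum_list (map abs ys)"
          by (rule sl_butlast)
        moreover have "sum_list (map abs (butlast ys)) \<ge> 0" by (rule sl_abs_nonneg)
        moreover have "length (butlast ys) < length ys" using ly l by simp
        ultimately show ?thesis using le ly unfolding ys_def[symmetric] r0 by (intro meas_lt) linarith
      next
        case False
        have r: "reduce_at ys i = take (i - 1) ys @ [ys ! (i - 1) + ys ! Suc i] @ drop (i + 2) ys"
          using z i0 False by (simp add: reduce_at_def)
        have si: "Suc i < length ys" using False i ly by simp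
        have dec: "ys = take (i - 1) ys @ [ys ! (i - 1), ys ! i, ys ! Suc i] @ drop (i + 2) ys"
        proof -
          have d1: "drop (Suc i) ys = ys ! Suc i # drop (i + 2) ys" using Cons_nth_drop_Suc[of "Suc i" ys] si
            by simp
          have d2: "drop i ys = ys ! i # drop (Suc i) ys" using si
            by (simp add: Cons_nth_drop_Suc)
          have d3: "drop (i - 1) ys = ys ! (i - 1) # drop i ys" using Cons_nth_drop_Suc[of "i - 1" ys] si i0
            by simp
          show ?thesis using d1 d2 d3 by (metis append_take_drop_id append_Cons append_Nil)
        qed
        have s1: "sum_list (map abs ys) = sum_list (map abs (take (i - 1) ys)) + (\<bar>ys ! (i - 1)\<bar> + \<bar>ys ! i\<bar> + \<bar>ys ! Suc i\<bar>) + sum_list (map abs (drop (i + 2) ys))"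
          by (subst dec) simp
        have s2: "sum_list (map abs (reduce_at ys i)) = sum_list (map abs (take (i - 1) ys)) + \<bar>ys ! (i - 1) + ys ! Suc i\<bar> + sum_list (map abs (drop (i + 2) ys))"
          unfolding r by simp
        have "\<bar>ys ! (i - 1) + ys ! Suc i\<bar> \<le> \<bar>ys ! (i - 1)\<bar> + \<bar>ys ! Suc i\<bar>" by (rule abs_triangle_ineq)
        then have "sum_list (map abs (reduce_at ys i)) \<le> sum_list (map abs ys)" using s1 s2 z by simp
        moreover have "length (reduce_at ys i) < length ys" unfolding r using si i0 by simp
        moreover have "sum_list (map abs (reduce_at ys i)) \<ge> 0" by (rule sl_abs_nonneg)
        ultimately show ?thesis using le ly unfolding ys_def[symmetric] r by (intro meas_lt) linarith
      qed
    qed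
  qed
qed

function PF :: "int list \<Rightarrow> nat" where
  "PF xs = (if length xs \<le> 1 then 1
            else (\<Sum>i<length xs. PF (reduce_at (xs[i := star1 (xs ! i)]) i)))"
  by auto
termination
  by (relation "measure F_meas") (auto intro: F_meas_dec)

end

theory Submission
  imports Defs
begin

text \<open>A Hamiltonian path of \<open>TT n\<close> is a permutation \<open>p\<close> of \<open>{0..<n}\<close> listed in path order,
  and it has type \<open>P(\<alpha>)\<close> iff its word of ascents is \<open>dirs \<alpha>\<close>. The largest vertex is a sink of
  \<open>TT n\<close>, so it sits at a position where both incident steps point towards it. Deleting it from
  \<open>p\<close> deletes one of these steps from the word, which in terms of \<open>\<alpha>\<close> decrements one block
  (merging the neighbouring blocks when it vanishes); conversely the maximum can be inserted at
  every such sink, each in exactly one way. This is the recursion defining \<open>PF\<close>, so \<open>PF \<alpha>\<close>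
  counts the permutations. A permutation and its reverse have the same arc set and no other
  permutations do, while reversal turns the word into its negated reverse; hence each arc set is
  counted once, or twice exactly when \<open>\<alpha>\<close> is symmetric.\<close>

section \<open>Permutations with a prescribed ascent word\<close>

definition remove_nth :: "nat \<Rightarrow> 'a list \<Rightarrow> 'a list" where
  "remove_nth k xs = take k xs @ drop (Suc k) xs"

definition insert_nth :: "nat \<Rightarrow> 'a \<Rightarrow> 'a list \<Rightarrow> 'a list" where
  "insert_nth k x xs = take k xs @ x # drop k xs"

lemma length_remove_nth [simp]: "k < length xs \<Longrightarrow> length (remove_nth k xs) = length xs - 1"
  unfolding remove_nth_def by auto

lemma take_remove_nth [simp]: "i \<le> k \<Longrightarrow> take i (remove_nth k xs) = take i xs"
  by (cases "k \<le> length xs") (auto simp: remove_nth_def min_def)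

lemma drop_remove_nth [simp]:
  "k \<le> i \<Longrightarrow> k \<le> length xs \<Longrightarrow> drop i (remove_nth k xs) = drop (Suc i) xs"
  by (simp add: remove_nth_def)

lemma take_nth_nth_drop:
  "Suc i < length xs \<Longrightarrow> take i xs @ xs ! i # xs ! Suc i # drop (Suc (Suc i)) xs = xs"
  by (simp add: Cons_nth_drop_Suc)

lemma remove_nth_append: "k < length xs \<Longrightarrow> remove_nth k (xs @ ys) = remove_nth k xs @ ys"
  by (simp add: remove_nth_def)

lemma remove_nth_append_length: "remove_nth (length xs + k) (xs @ ys) = xs @ remove_nth k ys"
  by (simp add: remove_nth_def)

lemma nth_remove_nth:
  "i < length xs - 1 \<Longrightarrow> remove_nth k xs ! i = (if i < k then xs ! i else xs ! Suc i)"
  by (auto simp: remove_nth_def nth_append min_def)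

lemma remove_nth_replicate: "k < n \<Longrightarrow> remove_nth k (replicate n x) = replicate (n - 1) x"
  by (simp add: remove_nth_def min_def replicate_add[symmetric])

lemma set_insert_nth: "k \<le> length xs \<Longrightarrow> set (insert_nth k x xs) = insert x (set xs)"
proof -
  have "set xs = set (take k xs) \<union> set (drop k xs)" by (metis append_take_drop_id set_append)
  then show ?thesis by (auto simp: insert_nth_def)
qed

lemma distinct_insert_nth: "distinct xs \<Longrightarrow> x \<notin> set xs \<Longrightarrow> distinct (insert_nth k x xs)"
  unfolding insert_nth_def
  using set_take_disj_set_drop_if_distinct[of xs k k] by (auto dest: in_set_takeD in_set_dropD)

lemma insert_nth_eq_iff:
  assumes "x \<notin> set xs" "x \<notin> set ys" "k \<le> length xs" "k' \<le> length ys"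
  shows "insert_nth k x xs = insert_nth k' x ys \<longleftrightarrow> k = k' \<and> xs = ys"
proof -
  have "x \<notin> set (take k xs)" "x \<notin> set (drop k xs)"
    "x \<notin> set (take k' ys)" "x \<notin> set (drop k' ys)"
    using assms(1,2) by (auto dest: in_set_takeD in_set_dropD)
  then have "insert_nth k x xs = insert_nth k' x ys \<longleftrightarrow>
             take k xs = take k' ys \<and> drop k xs = drop k' ys"
    by (simp add: insert_nth_def append_Cons_eq_iff)
  also have "\<dots> \<longleftrightarrow> k = k' \<and> xs = ys"
    using assms(3,4) by (metis append_take_drop_id length_take min_absorb2)
  finally show ?thesis .
qed

lemma rev_neq_self:
  assumes "distinct p" "2 \<le> length p"
  shows "rev p \<noteq> p"
proof
  assume "rev p = p"
  moreover have "p \<noteq> []" using assms(2) by auto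
  ultimately have "p ! (length p - 1) = p ! 0" using rev_nth[of 0 p] by simp
  then show False using assms \<open>p \<noteq> []\<close> nth_eq_iff_index_eq[of p "length p - 1" 0] by simp
qed

fun ascents :: "'a::linorder list \<Rightarrow> bool list" where
  "ascents (x # y # zs) = (x < y) # ascents (y # zs)"
| "ascents _ = []"

lemma length_ascents [simp]: "length (ascents xs) = length xs - 1"
  by (induction xs rule: ascents.induct) auto

lemma nth_ascents: "Suc i < length xs \<Longrightarrow> ascents xs ! i = (xs ! i < xs ! Suc i)"
  by (induction xs arbitrary: i rule: ascents.induct) (auto simp: nth_Cons split: nat.split)

lemma ascents_Cons: "xs \<noteq> [] \<Longrightarrow> ascents (x # xs) = (x < hd xs) # ascents xs"
  by (cases xs) auto

lemma ascents_append:
  "xs \<noteq> [] \<Longrightarrow> ys \<noteq> [] \<Longrightarrow> ascents (xs @ ys) = ascents xs @ (last xs < hd ys) # ascents ys"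
  by (induction xs rule: ascents.induct) (auto simp: ascents_Cons)

lemma ascents_take: "ascents (take k xs) = take (k - 1) (ascents xs)"
  by (rule nth_equalityI) (auto simp: nth_ascents min_def split: if_splits)

lemma ascents_drop: "ascents (drop k xs) = drop k (ascents xs)"
  by (rule nth_equalityI) (auto simp: nth_ascents)

lemma ascents_rev: "distinct xs \<Longrightarrow> ascents (rev xs) = map Not (rev (ascents xs))"
proof (induction xs rule: ascents.induct)
  case (1 x y zs)
  have "ascents (rev (x # y # zs)) = ascents (rev (y # zs)) @ [y < x]"
    using ascents_append[of "rev (y # zs)" "[x]"] by simp
  moreover have "(y < x) = (\<not> x < y)" using "1.prems" by auto
  ultimately show ?case using 1 by simp
qed auto

definition pattern_perms :: "bool list \<Rightarrow> nat list set" where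
  "pattern_perms d = {p. distinct p \<and> set p = {..length d} \<and> ascents p = d}"

lemma length_pattern_perm: "p \<in> pattern_perms d \<Longrightarrow> length p = Suc (length d)"
  unfolding pattern_perms_def by (metis (mono_tags) card_atMost distinct_card mem_Collect_eq)

lemma finite_pattern_perms: "finite (pattern_perms d)"
proof -
  have "pattern_perms d \<subseteq> {p. set p \<subseteq> {..length d} \<and> length p = Suc (length d)}"
    using length_pattern_perm by (auto simp: pattern_perms_def)
  then show ?thesis using finite_lists_length_eq[of "{..length d}"] finite_subset by blast
qed

lemma pattern_perms_Nil: "pattern_perms [] = {[0]}"
proof -
  have "p = [0]" if "set p = {0}" "distinct p" for p :: "nat list"
    using that by (cases p) (auto simp: subset_singleton_iff)
  then show ?thesis by (auto simp: pattern_perms_def)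
qed

text \<open>A word \<open>d\<close> is read as the shape of a path on the positions \<open>0, \<dots>, length d\<close>: step \<open>j\<close>
  joins positions \<open>j\<close> and \<open>Suc j\<close> and points forward iff \<open>d ! j\<close>. \<open>sink_steps d\<close> are the steps
  whose head is a sink of this path, \<open>sink_vertex d j\<close> is that head, and \<open>insert_sink k d\<close> is the
  word obtained by inserting a new sink at position \<open>k\<close>.\<close>

definition sink_steps :: "bool list \<Rightarrow> nat set" where
  "sink_steps d = {j. j < length d \<and>
     (if d ! j then Suc j < length d \<longrightarrow> \<not> d ! Suc j else 0 < j \<longrightarrow> d ! (j - 1))}"

definition sink_vertex :: "bool list \<Rightarrow> nat \<Rightarrow> nat" where
  "sink_vertex d j = (if d ! j then Suc j else j)"

definition insert_sink :: "nat \<Rightarrow> bool list \<Rightarrow> bool list" where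
  "insert_sink k d = take (k - 1) d @ (if k = 0 then [] else [True])
     @ (if length d < k then [] else [False]) @ drop k d"

lemma finite_sink_steps: "finite (sink_steps d)"
  by (simp add: sink_steps_def)

lemma ascents_insert_nth_max:
  assumes "q \<noteq> []" and "k \<le> length q" and "\<forall>x\<in>set q. x < m"
  shows "ascents (insert_nth k m q) = insert_sink k (ascents q)"
proof -
  have after: "ascents (m # drop k q) = (if k = length q then [] else False # drop k (ascents q))"
  proof (cases "k = length q")
    case False
    then have "drop k q \<noteq> []" "hd (drop k q) \<in> set q"
      using assms(2) by (auto simp: hd_drop_conv_nth)
    then show ?thesis using assms(3) False by (auto simp: ascents_Cons ascents_drop)
  qed simp
  have "(length q - 1 < k) = (k = length q)" using assms(1,2) by (cases q) auto
  show ?thesis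
  proof (cases "k = 0")
    case True
    then show ?thesis using after assms(1) by (simp add: insert_nth_def insert_sink_def)
  next
    case False
    then have "take k q \<noteq> []" using assms(1) by simp
    then have "last (take k q) \<in> set q" by (meson last_in_set in_set_takeD)
    then show ?thesis using after assms(3) \<open>(length q - 1 < k) = (k = length q)\<close> False
      \<open>take k q \<noteq> []\<close>
      by (auto simp: insert_nth_def insert_sink_def ascents_append ascents_take)
  qed
qed

lemma insert_sink_remove_sink_step:
  assumes "j \<in> sink_steps d"
  shows "insert_sink (sink_vertex d j) (remove_nth j d) = d"
proof -
  have j: "j < length d" using assms by (simp add: sink_steps_def)
  show ?thesis
  proof (cases "d ! j")
    case True
    show ?thesis
    proof (cases "Suc j < length d")
      case True
      then have "\<not> d ! Suc j" using assms \<open>d ! j\<close> by (simp add: sink_steps_def)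
      then show ?thesis
        using take_nth_nth_drop[OF True] True \<open>d ! j\<close> by (simp add: sink_vertex_def insert_sink_def)
    next
      case False
      then have "Suc j = length d" using j by simp
      then have "remove_nth j d = take j d" "take j d @ [d ! j] = d"
        by (simp_all add: remove_nth_def take_Suc_conv_app_nth[symmetric])
      then show ?thesis using False j \<open>d ! j\<close> by (simp add: sink_vertex_def insert_sink_def)
    qed
  next
    case False
    show ?thesis
    proof (cases "j = 0")
      case True
      then show ?thesis using j False Cons_nth_drop_Suc[OF j]
        by (simp add: sink_vertex_def insert_sink_def remove_nth_def)
    next
      case j0: False
      then have "d ! (j - 1)" using assms False by (simp add: sink_steps_def)
      then show ?thesis
        using take_nth_nth_drop[of "j - 1" d] j j0 False
        by (auto simp: sink_vertex_def insert_sink_def)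
    qed
  qed
qed

lemma sink_step_of_insert_sink:
  assumes "k \<le> Suc (length d)"
  shows "\<exists>j\<in>sink_steps (insert_sink k d).
           sink_vertex (insert_sink k d) j = k \<and> remove_nth j (insert_sink k d) = d"
proof -
  define e where "e = insert_sink k d"
  consider "k = 0" | "k = Suc (length d)" | "0 < k" "k \<le> length d" using assms by linarith
  then show ?thesis
  proof cases
    case 1
    then have "e = False # d" by (simp add: e_def insert_sink_def)
    then have "0 \<in> sink_steps e \<and> sink_vertex e 0 = k \<and> remove_nth 0 e = d"
      using 1 by (simp add: sink_steps_def sink_vertex_def remove_nth_def)
    then show ?thesis unfolding e_def by blast
  next
    case 2
    then have "e = d @ [True]" by (simp add: e_def insert_sink_def)
    then have "length d \<in> sink_steps e \<and> sink_vertex e (length d) = k \<and> remove_nth (length d) e = d"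
      using 2 by (simp add: sink_steps_def sink_vertex_def remove_nth_def)
    then show ?thesis unfolding e_def by blast
  next
    case 3
    then have e: "e = take (k - 1) d @ True # False # drop k d"
      by (simp add: e_def insert_sink_def)
    have d: "take (k - 1) d @ d ! (k - 1) # drop k d = d"
      using 3 id_take_nth_drop[of "k - 1" d] by simp
    have ek: "length e = Suc (length d)" "e ! (k - 1)" "\<not> e ! k"
      using 3 by (auto simp: e nth_append min_def)
    show ?thesis
    proof (cases "d ! (k - 1)")
      case True
      have "k \<in> sink_steps e \<and> sink_vertex e k = k \<and> remove_nth k e = d"
        using 3 ek d True by (simp add: sink_steps_def sink_vertex_def remove_nth_def e)
      then show ?thesis unfolding e_def by blast
    next
      case False
      have "k - 1 \<in> sink_steps e \<and> sink_vertex e (k - 1) = k \<and> remove_nth (k - 1) e = d"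
        using 3 ek d False by (simp add: sink_steps_def sink_vertex_def remove_nth_def e)
      then show ?thesis unfolding e_def by blast
    qed
  qed
qed

lemma sink_step_unique:
  assumes "j < length d" "j' < length d"
    and "sink_vertex d j = sink_vertex d j'" "remove_nth j d = remove_nth j' d"
  shows "j = j'"
proof -
  have False if "i < i'" "i' < length d"
    and "sink_vertex d i = sink_vertex d i'" "remove_nth i d = remove_nth i' d" for i i'
  proof -
    have "i' = Suc i" "d ! i" "\<not> d ! i'"
      using that(1,3) by (auto simp: sink_vertex_def split: if_splits)
    moreover have "remove_nth i d ! i = d ! Suc i" "remove_nth i' d ! i = d ! i"
      using that(1,2) by (simp_all add: nth_remove_nth)
    ultimately show False using that(4) by simp
  qed
  then show ?thesis using assms by (metis linorder_neqE_nat)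
qed

lemma pattern_perms_remove_nth:
  assumes "j < length d"
  shows "q \<in> pattern_perms (remove_nth j d) \<longleftrightarrow>
           distinct q \<and> set q = {..<length d} \<and> ascents q = remove_nth j d"
proof -
  have "{..length (remove_nth j d)} = {..<length d}" using assms by auto
  then show ?thesis by (simp add: pattern_perms_def)
qed

lemma insert_nth_sink_vertex_mem:
  assumes j: "j \<in> sink_steps d" and q: "q \<in> pattern_perms (remove_nth j d)"
  shows "insert_nth (sink_vertex d j) (length d) q \<in> pattern_perms d"
proof -
  have jd: "j < length d" using j by (simp add: sink_steps_def)
  have lq: "length q = length d" using jd length_pattern_perm[OF q] by simp
  have sq: "set q = {..<length d}" and aq: "ascents q = remove_nth j d" and dq: "distinct q"
    using q pattern_perms_remove_nth[OF jd] by simp_all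
  have "q \<noteq> []" "sink_vertex d j \<le> length q" using jd lq by (auto simp: sink_vertex_def)
  then have "ascents (insert_nth (sink_vertex d j) (length d) q) = d"
    using ascents_insert_nth_max[of q "sink_vertex d j" "length d"] sq aq
      insert_sink_remove_sink_step[OF j] by simp
  moreover have "set (insert_nth (sink_vertex d j) (length d) q) = {..length d}"
    using set_insert_nth[OF \<open>sink_vertex d j \<le> length q\<close>] sq by auto
  moreover have "distinct (insert_nth (sink_vertex d j) (length d) q)"
    using dq sq by (intro distinct_insert_nth) auto
  ultimately show ?thesis by (simp add: pattern_perms_def)
qed

lemma ex_insert_nth_sink_vertex:
  assumes p: "p \<in> pattern_perms d" and "d \<noteq> []"
  shows "\<exists>j\<in>sink_steps d. \<exists>q\<in>pattern_perms (remove_nth j d).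
           p = insert_nth (sink_vertex d j) (length d) q"
proof -
  define m where "m = length d"
  have dp: "distinct p" and sp: "set p = {..m}" and ap: "ascents p = d"
    using p by (auto simp: pattern_perms_def m_def)
  have "m \<in> set p" using sp by simp
  then obtain xs ys where p_split: "p = xs @ m # ys" by (meson split_list)
  define q where "q = xs @ ys"
  define k where "k = length xs"
  have pq: "p = insert_nth k m q" by (simp add: p_split q_def k_def insert_nth_def)
  have dq: "distinct q" and "set q = set p - {m}" using dp by (auto simp: p_split q_def)
  moreover have "{..m} - {m} = {..<m}" by auto
  ultimately have sq: "set q = {..<m}" using sp by simp
  have "length q = m" using length_pattern_perm[OF p] by (simp add: p_split q_def m_def)
  then have "q \<noteq> []" using \<open>d \<noteq> []\<close> m_def by auto
  have "k \<le> length q" by (simp add: q_def k_def)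
  then have "d = insert_sink k (ascents q)"
    using ascents_insert_nth_max[OF \<open>q \<noteq> []\<close>] sq ap pq by simp
  moreover have "k \<le> Suc (length (ascents q))" using \<open>k \<le> length q\<close> by simp
  ultimately have "\<exists>j\<in>sink_steps d. sink_vertex d j = k \<and> remove_nth j d = ascents q"
    using sink_step_of_insert_sink by simp
  then obtain j where j: "j \<in> sink_steps d" "sink_vertex d j = k" "remove_nth j d = ascents q"
    by blast
  then have "q \<in> pattern_perms (remove_nth j d)"
    using pattern_perms_remove_nth[of j d q] dq sq by (simp add: sink_steps_def m_def)
  then show ?thesis using j pq m_def by blast
qed

lemma insert_nth_sink_vertex_inj:
  assumes j: "j \<in> sink_steps d" "q \<in> pattern_perms (remove_nth j d)"
    and j': "j' \<in> sink_steps d" "q' \<in> pattern_perms (remove_nth j' d)"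
    and eq: "insert_nth (sink_vertex d j) (length d) q = insert_nth (sink_vertex d j') (length d) q'"
  shows "j = j' \<and> q = q'"
proof -
  have jd: "j < length d" "j' < length d" using j(1) j'(1) by (simp_all add: sink_steps_def)
  have "length q = length d" "length q' = length d"
    using length_pattern_perm[OF j(2)] length_pattern_perm[OF j'(2)] jd by simp_all
  moreover have "length d \<notin> set q" "length d \<notin> set q'"
    using j(2) j'(2) pattern_perms_remove_nth jd by auto
  moreover have "sink_vertex d j \<le> length d" "sink_vertex d j' \<le> length d"
    using jd by (simp_all add: sink_vertex_def)
  ultimately have "sink_vertex d j = sink_vertex d j' \<and> q = q'"
    using eq insert_nth_eq_iff by metis
  moreover have "remove_nth j d = remove_nth j' d"
    using j(2) j'(2) pattern_perms_remove_nth jd calculation by metis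
  ultimately show ?thesis using sink_step_unique jd by blast
qed

theorem card_pattern_perms_sink_steps:
  assumes "d \<noteq> []"
  shows "card (pattern_perms d) = (\<Sum>j\<in>sink_steps d. card (pattern_perms (remove_nth j d)))"
proof -
  define S where "S = (SIGMA j:sink_steps d. pattern_perms (remove_nth j d))"
  define g where "g = (\<lambda>(j, q). insert_nth (sink_vertex d j) (length d) q)"
  have "g ` S = pattern_perms d"
    using insert_nth_sink_vertex_mem ex_insert_nth_sink_vertex[OF _ assms]
    by (fastforce simp: S_def g_def)
  moreover have "inj_on g S"
    by (auto simp: inj_on_def S_def g_def dest: insert_nth_sink_vertex_inj)
  ultimately have "card (pattern_perms d) = card S" using card_image by fastforce
  also have "\<dots> = (\<Sum>j\<in>sink_steps d. card (pattern_perms (remove_nth j d)))"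
    by (simp add: S_def finite_sink_steps finite_pattern_perms)
  finally show ?thesis .
qed

section \<open>Blocks of a type and the path-function\<close>

definition alternating :: "int list \<Rightarrow> bool" where
  "alternating xs \<longleftrightarrow> (\<forall>x\<in>set xs. x \<noteq> 0) \<and> successively (\<lambda>x y. x * y < 0) xs"

lemma inK_iff_alternating: "inK xs \<longleftrightarrow> xs \<noteq> [] \<and> alternating xs"
  by (auto simp: inK_def alternating_def successively_conv_nth)

lemma alternating_Cons:
  "alternating (a # xs) \<longleftrightarrow> a \<noteq> 0 \<and> alternating xs \<and> (xs \<noteq> [] \<longrightarrow> a * hd xs < 0)"
  by (auto simp: alternating_def successively_Cons)

lemma alternating_append:
  "alternating (xs @ ys) \<longleftrightarrow>
     alternating xs \<and> alternating ys \<and> (xs \<noteq> [] \<longrightarrow> ys \<noteq> [] \<longrightarrow> last xs * hd ys < 0)"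
  by (auto simp: alternating_def successively_append_iff)

lemma dirs_Nil [simp]: "dirs [] = []"
  by (simp add: dirs_def)

lemma dirs_Cons [simp]: "dirs (a # xs) = replicate (nat \<bar>a\<bar>) (0 < a) @ dirs xs"
  by (simp add: dirs_def)

lemma dirs_append [simp]: "dirs (xs @ ys) = dirs xs @ dirs ys"
  by (simp add: dirs_def)

lemma length_dirs: "length (dirs xs) = (\<Sum>a\<leftarrow>xs. nat \<bar>a\<bar>)"
  by (induction xs) auto

lemma hd_dirs_Cons:
  assumes "alternating (a # xs)" and "xs \<noteq> []"
  shows "dirs xs \<noteq> [] \<and> hd (dirs xs) = (\<not> 0 < a)"
proof -
  obtain b ys where xs: "xs = b # ys" using assms(2) by (cases xs) auto
  have "b \<noteq> 0" "a * b < 0" using assms(1) by (auto simp: xs alternating_Cons)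
  then show ?thesis by (auto simp: xs mult_less_0_iff)
qed

text \<open>The step of block \<open>i\<close> whose head is a sink: the last step of a forward block, the first
  step of a backward one.\<close>

fun sink_step :: "int list \<Rightarrow> nat \<Rightarrow> nat" where
  "sink_step [] i = 0"
| "sink_step (a # xs) 0 = (if 0 < a then nat \<bar>a\<bar> - 1 else 0)"
| "sink_step (a # xs) (Suc i) = nat \<bar>a\<bar> + sink_step xs i"

lemma sink_step_less: "alternating xs \<Longrightarrow> i < length xs \<Longrightarrow> sink_step xs i < length (dirs xs)"
proof (induction xs arbitrary: i)
  case (Cons a xs)
  then show ?case by (cases i) (auto simp: alternating_Cons)
qed simp

lemma inj_on_sink_step: "alternating xs \<Longrightarrow> inj_on (sink_step xs) {..<length xs}"
proof (induction xs)
  case (Cons a xs)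
  have a: "a \<noteq> 0" and IH: "inj_on (sink_step xs) {..<length xs}"
    using Cons by (simp_all add: alternating_Cons)
  have "sink_step (a # xs) 0 < nat \<bar>a\<bar>" using a by auto
  then show ?case
    using IH by (auto simp: inj_on_def lessThan_Suc_eq_insert_0 less_Suc_eq_0_disj)
qed simp

lemma replicate_star1:
  "a \<noteq> 0 \<Longrightarrow> replicate (nat \<bar>star1 a\<bar>) (0 < star1 a) = replicate (nat \<bar>a\<bar> - 1) (0 < a)"
  by (cases "a = 1 \<or> a = -1") (auto simp: star1_def sgn_if nat_diff_distrib)

lemma remove_nth_sink_step:
  "alternating xs \<Longrightarrow> i < length xs \<Longrightarrow>
     remove_nth (sink_step xs i) (dirs xs) = dirs (xs[i := star1 (xs ! i)])"
proof (induction xs arbitrary: i)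
  case (Cons a xs)
  have a: "a \<noteq> 0" and alt: "alternating xs" using Cons.prems by (simp_all add: alternating_Cons)
  show ?case
  proof (cases i)
    case 0
    have "remove_nth (sink_step (a # xs) 0) (replicate (nat \<bar>a\<bar>) (0 < a))
          = replicate (nat \<bar>a\<bar> - 1) (0 < a)"
      using a by (intro remove_nth_replicate) auto
    moreover have "sink_step (a # xs) 0 < nat \<bar>a\<bar>" using a by auto
    ultimately show ?thesis using 0 a by (simp add: remove_nth_append replicate_star1)
  next
    case (Suc i')
    then show ?thesis
      using Cons.IH[OF alt] Cons.prems
        remove_nth_append_length[of "replicate (nat \<bar>a\<bar>) (0 < a)" "sink_step xs i'" "dirs xs"]
      by simp
  qed
qed simp

lemma sink_steps_replicate_append:
  assumes "0 < r" and hd_D: "D \<noteq> [] \<Longrightarrow> hd D = (\<not> b)"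
  shows "sink_steps (replicate r b @ D) = insert (if b then r - 1 else 0) ((+) r ` sink_steps D)"
proof -
  define e where "e = replicate r b @ D"
  have nth_e: "e ! i = (if i < r then b else D ! (i - r))" for i
    by (simp add: e_def nth_append)
  have len_e: "length e = r + length D" by (simp add: e_def)
  have D0: "D ! 0 = (\<not> b)" if "D \<noteq> []"
    using hd_D that by (cases D) auto
  have low: "j \<in> sink_steps e \<longleftrightarrow> j = (if b then r - 1 else 0)" if "j < r" for j
  proof (cases b)
    case True
    then show ?thesis
      using that nth_e[of "Suc j"] D0 len_e by (auto simp: sink_steps_def nth_e)
  next
    case False
    then show ?thesis using that nth_e[of "j - 1"] len_e by (auto simp: sink_steps_def nth_e)
  qed
  have high: "r + j \<in> sink_steps e \<longleftrightarrow> j \<in> sink_steps D" for j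
  proof -
    have "e ! (r + j - 1) = (if j = 0 then b else D ! (j - 1))"
      using assms(1) by (auto simp: nth_e)
    then show ?thesis using assms(1) D0 len_e by (auto simp: sink_steps_def nth_e)
  qed
  show ?thesis
  proof (rule set_eqI)
    fix j
    show "j \<in> sink_steps (replicate r b @ D) \<longleftrightarrow> j \<in> insert (if b then r - 1 else 0) ((+) r ` sink_steps D)"
    proof (cases "j < r")
      case True
      then show ?thesis using low[OF True] by (auto simp: e_def)
    next
      case False
      then obtain j' where "j = r + j'" using le_Suc_ex by (metis not_less)
      then show ?thesis using high[of j'] assms(1) by (auto simp: e_def)
    qed
  qed
qed

lemma sink_steps_dirs: "alternating xs \<Longrightarrow> sink_steps (dirs xs) = sink_step xs ` {..<length xs}"
proof (induction xs)
  case Nil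
  then show ?case by (simp add: sink_steps_def)
next
  case (Cons a xs)
  have a: "a \<noteq> 0" and alt: "alternating xs" using Cons.prems by (simp_all add: alternating_Cons)
  have "xs \<noteq> [] \<Longrightarrow> dirs xs \<noteq> [] \<Longrightarrow> hd (dirs xs) = (\<not> 0 < a)"
    using hd_dirs_Cons[OF Cons.prems] by simp
  moreover have "dirs xs \<noteq> [] \<Longrightarrow> xs \<noteq> []" by auto
  ultimately have "sink_steps (dirs (a # xs))
      = insert (sink_step (a # xs) 0) ((+) (nat \<bar>a\<bar>) ` sink_steps (dirs xs))"
    using sink_steps_replicate_append[of "nat \<bar>a\<bar>" "dirs xs" "0 < a"] a by simp
  then show ?case
    by (simp add: Cons.IH[OF alt] lessThan_Suc_eq_insert_0 image_image del: sink_step.simps(2))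
qed

lemma alternating_sgn_cong:
  assumes "map sgn xs = map sgn ys"
  shows "alternating xs \<longleftrightarrow> alternating ys"
proof -
  have "alternating zs \<longleftrightarrow> alternating (map sgn zs)" for zs :: "int list"
    by (simp add: alternating_def successively_map sgn_mult[symmetric] sgn_less sgn_0_0)
  then show ?thesis using assms by metis
qed

lemma alternating_remove_pair: "alternating (xs @ a # b # ys) \<Longrightarrow> alternating (xs @ ys)"
  by (auto simp: alternating_append alternating_Cons mult_less_0_iff)

lemma dirs_merge: "0 < c * b \<Longrightarrow> dirs [c + b] = dirs [c, b]"
  by (auto simp: zero_less_mult_iff replicate_add[symmetric] nat_add_distrib)

lemma sgn_star1: "star1 a \<noteq> 0 \<Longrightarrow> sgn (star1 a) = sgn a"
  by (auto simp: star1_def sgn_if)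

lemma reduce_at_zero:
  "reduce_at (xs @ 0 # ys) (length xs) =
     (if xs = [] then ys else if ys = [] then xs else butlast xs @ (last xs + hd ys) # tl ys)"
proof -
  have "take (length xs - 1) (xs @ 0 # ys) = butlast xs" by (simp add: butlast_conv_take)
  moreover have "xs \<noteq> [] \<Longrightarrow> (xs @ 0 # ys) ! (length xs - 1) = last xs"
    by (simp add: nth_append last_conv_nth)
  moreover have "ys \<noteq> [] \<Longrightarrow> (xs @ 0 # ys) ! Suc (length xs) = hd ys"
    by (simp add: nth_append hd_conv_nth)
  moreover have "drop (length xs + 2) (xs @ 0 # ys) = tl ys" by (simp add: drop_Suc)
  ultimately show ?thesis by (simp add: reduce_at_def)
qed

definition decrement_block :: "nat \<Rightarrow> int list \<Rightarrow> int list" where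
  "decrement_block i xs = reduce_at (xs[i := star1 (xs ! i)]) i"

lemma PF_decrement_block: "2 \<le> length xs \<Longrightarrow> PF xs = (\<Sum>i<length xs. PF (decrement_block i xs))"
  by (subst PF.simps) (simp add: decrement_block_def)

lemma decrement_block_alternating:
  assumes alt: "alternating (xs @ a # ys)" and len: "xs \<noteq> [] \<or> ys \<noteq> []"
  defines "e \<equiv> decrement_block (length xs) (xs @ a # ys)"
  shows "alternating e \<and> e \<noteq> [] \<and> dirs e = dirs (xs @ star1 a # ys)"
proof (cases "star1 a = 0")
  case False
  then have "e = xs @ star1 a # ys" by (simp add: e_def decrement_block_def reduce_at_def)
  moreover have "map sgn (xs @ star1 a # ys) = map sgn (xs @ a # ys)" using sgn_star1[OF False] by simp
  ultimately show ?thesis using alt alternating_sgn_cong[of "xs @ star1 a # ys" "xs @ a # ys"] by auto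
next
  case True
  then have e: "e = reduce_at (xs @ 0 # ys) (length xs)" by (simp add: e_def decrement_block_def)
  consider "xs = []" | "ys = []" | "xs \<noteq> []" "ys \<noteq> []" by blast
  then show ?thesis
  proof cases
    case 1
    then show ?thesis using e len alt True reduce_at_zero[of xs ys] by (simp add: alternating_Cons)
  next
    case 2
    then show ?thesis using e len alt True reduce_at_zero[of xs ys] by (simp add: alternating_append)
  next
    case 3
    then obtain xs' c b ys' where xs: "xs = xs' @ [c]" and ys: "ys = b # ys'"
      by (metis append_butlast_last_id list.exhaust)
    have e': "e = xs' @ (c + b) # ys'" using e 3 reduce_at_zero[of xs ys] by (simp add: xs ys)
    have "c * a < 0" "a * b < 0" using alt by (auto simp: xs ys alternating_append alternating_Cons)
    then have cb: "0 < c * b" by (auto simp: mult_less_0_iff zero_less_mult_iff)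
    have "alternating (xs' @ c # ys')"
      using alternating_remove_pair[of "xs' @ [c]" a b ys'] alt by (simp add: xs ys)
    moreover have "map sgn (xs' @ (c + b) # ys') = map sgn (xs' @ c # ys')"
      using cb by (auto simp: zero_less_mult_iff sgn_if)
    ultimately have "alternating e" using alternating_sgn_cong e' by metis
    moreover have "dirs e = dirs (xs @ star1 a # ys)"
      using dirs_merge[OF cb] True by (simp add: e' xs ys)
    ultimately show ?thesis by (simp add: e')
  qed
qed

lemma card_pattern_perms_replicate: "card (pattern_perms (replicate k b)) = 1"
proof (induction k)
  case 0
  then show ?case by (simp add: pattern_perms_Nil)
next
  case (Suc k)
  have "sink_steps (replicate (Suc k) b) = {if b then k else 0}"
    using sink_steps_replicate_append[of "Suc k" "[]" b] by (simp add: sink_steps_def)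
  moreover have "remove_nth (if b then k else 0) (replicate (Suc k) b) = replicate k b"
    by (simp add: remove_nth_replicate del: replicate_Suc)
  ultimately show ?case using card_pattern_perms_sink_steps[of "replicate (Suc k) b"] Suc.IH by simp
qed

lemma decrement_block_inK_dirs:
  assumes "inK xs" "2 \<le> length xs" "i < length xs"
  shows "inK (decrement_block i xs) \<and>
         dirs (decrement_block i xs) = remove_nth (sink_step xs i) (dirs xs)"
proof -
  define ys zs where "ys = take i xs" and "zs = drop (Suc i) xs"
  have xs: "xs = ys @ xs ! i # zs" and i: "i = length ys"
    using assms(3) by (simp_all add: ys_def zs_def id_take_nth_drop)
  have alt: "alternating xs" using assms(1) by (simp add: inK_iff_alternating)
  have "ys \<noteq> [] \<or> zs \<noteq> []" using assms(2) arg_cong[OF xs, of length] by auto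
  then have "alternating (decrement_block i xs) \<and> decrement_block i xs \<noteq> [] \<and>
      dirs (decrement_block i xs) = dirs (xs[i := star1 (xs ! i)])"
    using decrement_block_alternating[of ys "xs ! i" zs] alt xs i by (metis list_update_length)
  then show ?thesis using remove_nth_sink_step[OF alt assms(3)] by (simp add: inK_iff_alternating)
qed

theorem PF_eq_card_pattern_perms: "inK xs \<Longrightarrow> PF xs = card (pattern_perms (dirs xs))"
proof (induction xs rule: PF.induct)
  case (1 xs)
  have alt: "alternating xs" and "xs \<noteq> []" using "1.prems" by (simp_all add: inK_iff_alternating)
  show ?case
  proof (cases "length xs \<le> 1")
    case True
    then obtain a where "xs = [a]" using \<open>xs \<noteq> []\<close> by (cases xs) auto
    then show ?thesis using card_pattern_perms_replicate by simp
  next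
    case False
    have "PF (decrement_block i xs) = card (pattern_perms (remove_nth (sink_step xs i) (dirs xs)))"
      if "i < length xs" for i
      using "1.IH"[OF False] decrement_block_inK_dirs[OF "1.prems" _ that] False that
      by (simp add: decrement_block_def)
    then have "PF xs = (\<Sum>i<length xs. card (pattern_perms (remove_nth (sink_step xs i) (dirs xs))))"
      using False PF_decrement_block by simp
    also have "\<dots> = (\<Sum>j\<in>sink_steps (dirs xs). card (pattern_perms (remove_nth j (dirs xs))))"
      by (simp add: sink_steps_dirs[OF alt] sum.reindex[OF inj_on_sink_step[OF alt]])
    also have "\<dots> = card (pattern_perms (dirs xs))"
    proof -
      have "dirs xs \<noteq> []" using sink_step_less[OF alt, of 0] \<open>xs \<noteq> []\<close> by auto
      then show ?thesis by (rule card_pattern_perms_sink_steps[symmetric])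
    qed
    finally show ?thesis .
  qed
qed

lemma takeWhile_dirs_Cons:
  assumes "alternating (a # xs)"
  shows "takeWhile (\<lambda>x. x = (0 < a)) (dirs (a # xs)) = replicate (nat \<bar>a\<bar>) (0 < a)"
proof -
  have "takeWhile (\<lambda>x. x = (0 < a)) (dirs xs) = []"
  proof (cases "xs = []")
    case False
    then show ?thesis using hd_dirs_Cons[OF assms] by (cases "dirs xs") auto
  qed simp
  then show ?thesis by (subst dirs_Cons, subst takeWhile_append2) auto
qed

lemma dirs_inj: "alternating xs \<Longrightarrow> alternating ys \<Longrightarrow> dirs xs = dirs ys \<Longrightarrow> xs = ys"
proof (induction xs arbitrary: ys)
  case Nil
  then show ?case by (cases ys) (auto simp: alternating_Cons)
next
  case (Cons a xs)
  have a: "a \<noteq> 0" using Cons.prems(1) by (simp add: alternating_Cons)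
  then obtain b zs where ys: "ys = b # zs" using Cons.prems by (cases ys) auto
  have b: "b \<noteq> 0" using Cons.prems(2) by (simp add: ys alternating_Cons)
  have "hd (dirs (a # xs)) = (0 < a)" "hd (dirs (b # zs)) = (0 < b)" using a b by auto
  then have sign: "(0 < a) = (0 < b)" using Cons.prems(3) ys by simp
  then have "replicate (nat \<bar>a\<bar>) (0 < a) = replicate (nat \<bar>b\<bar>) (0 < b)"
    using takeWhile_dirs_Cons[OF Cons.prems(1)] takeWhile_dirs_Cons[of b zs] Cons.prems ys by simp
  then have "a = b" using sign a b by (auto dest: arg_cong[of _ _ length])
  then show ?case
    using Cons.IH[of zs] Cons.prems ys by (simp add: alternating_Cons)
qed

lemma dirs_map_uminus_rev: "dirs (map uminus (rev xs)) = map Not (rev (dirs xs))"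
proof (induction xs)
  case (Cons a xs)
  have "replicate (nat \<bar>a\<bar>) (0 < - a) = replicate (nat \<bar>a\<bar>) (\<not> 0 < a)"
    by (cases "a = 0") auto
  then show ?case using Cons by (simp add: rev_map[symmetric])
qed simp

lemma symmetric_tuple_iff:
  assumes "alternating xs"
  shows "symmetric_tuple xs \<longleftrightarrow> dirs xs = map Not (rev (dirs xs))"
proof -
  have "alternating (map uminus (rev xs))"
    using assms by (auto simp: alternating_def successively_map mult.commute)
  then show ?thesis
    using dirs_inj[OF assms] dirs_map_uminus_rev[of xs] by (auto simp: symmetric_tuple_def)
qed

section \<open>Arc sets of paths in the transitive tournament\<close>

lemma rev_mem_pattern_perms_iff:
  "p \<in> pattern_perms d \<Longrightarrow> rev p \<in> pattern_perms d \<longleftrightarrow> d = map Not (rev d)"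
  by (auto simp: pattern_perms_def ascents_rev)

text \<open>An undirected edge is stored as the pair (smaller end, larger end), which is the form of
  the arcs of \<open>TT n\<close>.\<close>

definition edge_set :: "nat list \<Rightarrow> (nat \<times> nat) set" where
  "edge_set p = (\<lambda>k. (min (p ! k) (p ! Suc k), max (p ! k) (p ! Suc k))) ` {..<length p - 1}"

lemma edge_in_edge_set:
  "Suc k < length p \<Longrightarrow> (min (p ! k) (p ! Suc k), max (p ! k) (p ! Suc k)) \<in> edge_set p"
  by (auto simp: edge_set_def)

lemma min_max_eq_iff:
  "(min a b, max a b) = (min c d, max c d) \<longleftrightarrow> a = c \<and> b = d \<or> a = d \<and> b = (c::'a::linorder)"
  by (auto simp: min_def max_def)

lemma path_arcs_eq_edge_set:
  assumes "p \<in> pattern_perms d"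
  shows "path_arcs p d = edge_set p"
proof -
  have len: "length p - 1 = length d" using length_pattern_perm[OF assms] by simp
  have "step_arc p d k = (min (p ! k) (p ! Suc k), max (p ! k) (p ! Suc k))" if "k < length d" for k
  proof -
    have "d ! k = (p ! k < p ! Suc k)"
      using assms that len nth_ascents[of k p] by (simp add: pattern_perms_def)
    moreover have "p ! k \<noteq> p ! Suc k"
      using assms that len nth_eq_iff_index_eq[of p k "Suc k"] by (simp add: pattern_perms_def)
    ultimately show ?thesis by (auto simp: step_arc_def min_def max_def)
  qed
  then show ?thesis unfolding path_arcs_def edge_set_def len by (intro image_cong) auto
qed

lemma edge_set_rev_subset: "edge_set (rev p) \<subseteq> edge_set p"
proof
  fix e assume "e \<in> edge_set (rev p)"
  then obtain k where "k < length p - 1"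
    and e: "e = (min (rev p ! k) (rev p ! Suc k), max (rev p ! k) (rev p ! Suc k))"
    by (auto simp: edge_set_def)
  then have k: "Suc k < length p" by simp
  define k' where "k' = length p - 2 - k"
  have "rev p ! k = p ! Suc k'" "rev p ! Suc k = p ! k'" "Suc k' < length p"
    using k by (simp_all add: rev_nth k'_def Suc_diff_Suc)
  then show "e \<in> edge_set p" using edge_in_edge_set[of k' p] by (simp add: e min.commute max.commute)
qed

lemma edge_set_rev [simp]: "edge_set (rev p) = edge_set p"
  using edge_set_rev_subset[of p] edge_set_rev_subset[of "rev p"] by simp

lemma edge_set_neighbour:
  assumes "distinct p" "i < length p" "(min (p ! i) y, max (p ! i) y) \<in> edge_set p"
  shows "Suc i < length p \<and> y = p ! Suc i \<or> 0 < i \<and> y = p ! (i - 1)"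
proof -
  obtain k where "k < length p - 1"
    and "(min (p ! i) y, max (p ! i) y) = (min (p ! k) (p ! Suc k), max (p ! k) (p ! Suc k))"
    using assms(3) by (auto simp: edge_set_def simp del: prod.inject)
  then have k: "Suc k < length p"
    and "p ! i = p ! k \<and> y = p ! Suc k \<or> p ! i = p ! Suc k \<and> y = p ! k"
    by (simp_all only: min_max_eq_iff)
  then have "i = k \<and> y = p ! Suc k \<or> i = Suc k \<and> y = p ! k"
    using nth_eq_iff_index_eq[OF assms(1)] assms(2) by auto
  then show ?thesis using k by auto
qed

lemma eq_if_edge_set_subset_same_start:
  assumes "distinct p" "distinct q" "length q = length p"
    and "edge_set q \<subseteq> edge_set p" "q ! 0 = p ! 0"
  shows "q = p"
proof (rule nth_equalityI)
  show "length q = length p" by fact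
  show "q ! i = p ! i" if "i < length q" for i
    using that
  proof (induction i rule: less_induct)
    case (less i)
    show ?case
    proof (cases i)
      case (Suc j)
      have "(min (p ! j) (q ! i), max (p ! j) (q ! i)) \<in> edge_set p"
        using edge_in_edge_set[of j q] less.prems less.IH[of j] assms(4) Suc by auto
      then have "q ! i = p ! i \<or> 0 < j \<and> q ! i = q ! (j - 1)"
        using edge_set_neighbour[OF assms(1), of j] less.prems less.IH[of "j - 1"] assms(3) Suc
        by auto
      then show ?thesis
        using nth_eq_iff_index_eq[OF assms(2), of i "j - 1"] less.prems Suc by auto
    qed (use assms(5) in simp)
  qed
qed

lemma eq_or_rev_if_edge_set_eq:
  assumes "distinct p" "distinct q" "set q = set p" "2 \<le> length p" "edge_set q = edge_set p"
  shows "q = p \<or> q = rev p"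
proof -
  have len: "length q = length p" using assms(1-3) by (metis distinct_card)
  moreover have "p \<noteq> []" using assms(4) by auto
  ultimately have "q ! 0 \<in> set p" using assms(3) nth_mem[of 0 q] by simp
  then obtain i where i: "i < length p" "p ! i = q ! 0" by (auto simp: in_set_conv_nth)
  consider "i = 0" | "i = length p - 1" | "0 < i" "i < length p - 1" using i(1) by linarith
  then show ?thesis
  proof cases
    case 1
    then show ?thesis using eq_if_edge_set_subset_same_start assms len i by simp
  next
    case 2
    then have "q ! 0 = rev p ! 0" using i \<open>p \<noteq> []\<close> by (simp add: rev_nth)
    then show ?thesis using eq_if_edge_set_subset_same_start[of "rev p" q] assms len by simp
  next
    case 3
    have "(min (q ! 0) (p ! (i - 1)), max (q ! 0) (p ! (i - 1))) \<in> edge_set q"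
      "(min (q ! 0) (p ! Suc i), max (q ! 0) (p ! Suc i)) \<in> edge_set q"
      using edge_in_edge_set[of "i - 1" p] edge_in_edge_set[of i p] 3 i assms(5)
      by (simp_all add: min.commute max.commute)
    then have "p ! (i - 1) = q ! 1" "p ! Suc i = q ! 1"
      using edge_set_neighbour[OF assms(2), of 0 "p ! (i - 1)"]
        edge_set_neighbour[OF assms(2), of 0 "p ! Suc i"] len \<open>p \<noteq> []\<close> by simp_all
    then have "p ! (i - 1) = p ! Suc i" by simp
    moreover have "i - 1 \<noteq> Suc i" "i - 1 < length p" "Suc i < length p" using 3 by auto
    ultimately show ?thesis using nth_eq_iff_index_eq[OF assms(1), of "i - 1" "Suc i"] by simp
  qed
qed

lemma card_eq_mult_card_image:
  assumes "finite A" and "\<And>y. y \<in> f ` A \<Longrightarrow> card {a \<in> A. f a = y} = k"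
  shows "card A = k * card (f ` A)"
proof -
  have "{y \<in> f ` A. f a = y} = {f a}" if "a \<in> A" for a
    using that by auto
  then have "card A = (\<Sum>a\<in>A. card {y \<in> f ` A. f a = y})" by simp
  also have "\<dots> = k * card (f ` A)"
    using assms by (intro sum_multicount) auto
  finally show ?thesis .
qed

lemma path_arcs_fiber:
  assumes p: "p \<in> pattern_perms d" and "d \<noteq> []"
  shows "{q \<in> pattern_perms d. path_arcs q d = path_arcs p d} =
           (if d = map Not (rev d) then {p, rev p} else {p})"
proof -
  have "q = p \<or> q = rev p" if q: "q \<in> pattern_perms d" "path_arcs q d = path_arcs p d" for q
  proof (rule eq_or_rev_if_edge_set_eq)
    show "distinct p" "distinct q" "set q = set p" using p q(1) by (simp_all add: pattern_perms_def)
    show "2 \<le> length p" using length_pattern_perm[OF p] \<open>d \<noteq> []\<close> by (cases d) auto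
    show "edge_set q = edge_set p"
      using q path_arcs_eq_edge_set[OF p] path_arcs_eq_edge_set[OF q(1)] by simp
  qed
  moreover have "path_arcs (rev p) d = path_arcs p d" if "rev p \<in> pattern_perms d"
    using path_arcs_eq_edge_set[OF p] path_arcs_eq_edge_set[OF that] by simp
  ultimately show ?thesis using rev_mem_pattern_perms_iff[OF p] p by auto
qed

theorem card_pattern_perms_eq_mult_card_arc_sets:
  assumes "d \<noteq> []"
  shows "card (pattern_perms d) =
           (if d = map Not (rev d) then 2 else 1) * card ((\<lambda>p. path_arcs p d) ` pattern_perms d)"
proof (rule card_eq_mult_card_image[OF finite_pattern_perms])
  fix y assume "y \<in> (\<lambda>p. path_arcs p d) ` pattern_perms d"
  then obtain p where p: "p \<in> pattern_perms d" "y = path_arcs p d" by blast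
  have "2 \<le> length p" using length_pattern_perm[OF p(1)] assms by (cases d) auto
  then have "rev p \<noteq> p" using p(1) rev_neq_self by (auto simp: pattern_perms_def)
  then show "card {q \<in> pattern_perms d. path_arcs q d = y} = (if d = map Not (rev d) then 2 else 1)"
    using path_arcs_fiber[OF p(1) assms] p(2) by simp
qed

lemma step_arc_in_TT_iff:
  assumes "distinct p" "set p \<subseteq> {..<n}" "Suc k < length p"
  shows "step_arc p d k \<in> TT n \<longleftrightarrow> d ! k = (p ! k < p ! Suc k)"
proof -
  have "p ! k \<in> set p" "p ! Suc k \<in> set p" using assms(3) by simp_all
  then have "p ! k < n" "p ! Suc k < n" using assms(2) by auto
  moreover have "p ! k \<noteq> p ! Suc k" using assms(1,3) nth_eq_iff_index_eq[of p k "Suc k"] by simp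
  ultimately show ?thesis by (auto simp: step_arc_def TT_def)
qed

lemma is_path_of_type_TT_iff:
  assumes n: "n = Suc (length (dirs xs))"
  shows "is_path_of_type {..<n} (TT n) xs p \<longleftrightarrow> p \<in> pattern_perms (dirs xs)"
proof -
  have vertices: "set p \<subseteq> {..<n} \<and> length p = n \<longleftrightarrow> set p = {..length (dirs xs)}"
    if "distinct p"
    using that n distinct_card[OF that] card_subset_eq[of "{..<n}" "set p"]
    by (auto simp: lessThan_Suc_atMost)
  have steps: "(\<forall>k<length (dirs xs). step_arc p (dirs xs) k \<in> TT n) \<longleftrightarrow> ascents p = dirs xs"
    if "distinct p" "set p \<subseteq> {..<n}" "length p = n"
    using that n step_arc_in_TT_iff[OF that(1,2)] nth_ascents[of _ p]
    by (auto simp: list_eq_iff_nth_eq)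
  show ?thesis
    unfolding is_path_of_type_def pattern_perms_def
    using vertices steps n by (auto simp: lessThan_Suc_atMost)
qed

theorem theorem1:
  fixes n :: nat and \<alpha> :: "int list"
  assumes "n \<ge> 2"
    and "inK \<alpha>"
    and "(\<Sum>a\<leftarrow>\<alpha>. nat \<bar>a\<bar>) = n - 1"
  shows "real (f_count {..<n} (TT n) \<alpha>) =
           (if symmetric_tuple \<alpha> then real (PF \<alpha>) / 2 else real (PF \<alpha>))"
proof -
  define d where "d = dirs \<alpha>"
  have n: "n = Suc (length d)" using assms(1,3) by (simp add: d_def length_dirs)
  then have "d \<noteq> []" using assms(1) by auto
  have "f_count {..<n} (TT n) \<alpha> = card ((\<lambda>p. path_arcs p d) ` pattern_perms d)"
    using is_path_of_type_TT_iff[of n \<alpha>] n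
    by (simp add: f_count_def d_def Setcompr_eq_image)
  moreover have "PF \<alpha> = card (pattern_perms d)"
    using PF_eq_card_pattern_perms[OF assms(2)] by (simp add: d_def)
  moreover have "symmetric_tuple \<alpha> \<longleftrightarrow> d = map Not (rev d)"
    using symmetric_tuple_iff assms(2) by (simp add: d_def inK_iff_alternating)
  ultimately show ?thesis
    using card_pattern_perms_eq_mult_card_arc_sets[OF \<open>d \<noteq> []\<close>] by auto
qed

end
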